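(* Let $\tau$ be a graph on a closed oriented surface which lifts to a triangulation of the universal cover, let $E$ be its set of edges, let $\mathbf{c}:E\to\mathbb{R}$, and let $v$ be a vertex of $\tau$ of valence $m$. With $x_i$, $A_i$, $W_j=\begin{pmatrix}a_j&b_j\\c_j&d_j\end{pmatrix}$ as in the context, the following are equivalent: (A) $W_m=-I$, and $a_j<0$, $c_j<0$, $b_j>0$, $d_j>0$ for $1\le j\le m-1$ except that $a_1=0$ and $d_{m-1}=0$; (B) $W_m=-I$, and $a_j\le 0$, $c_j\le 0$, $b_j\ge 0$, $d_j\ge 0$ for $1\le j\le m-1$ except that $a_1=0$ and $d_{m-1}=0$.
   Context: List the edge-ends incident to $v$ in clockwise order (with respect to the orientation of the surface) as $e_1,\dots,e_m$, an edge with both endpoints at $v$ contributing two entries. Set $x_i=\mathbf{c}(e_i)$, $A_i=\begin{pmatrix}0&1\\-1&x_i\end{pmatrix}$, $W_j=A_1A_2\cdots A_j=\begin{pmatrix}a_j&b_j\\c_j&d_j\end{pmatrix}$ for $j=1,\dots,m$, and $I$ is the $2\times2$ identity matrix. In both (A) and (B), the phrase "except that $a_1=0$ and $d_{m-1}=0$" means the sign conditions are not imposed on $a_1$ and $d_{m-1}$, which equal $0$. *)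

theory Defs
  imports "HOL-Analysis.Analysis"
begin

definition Amat :: "real \<Rightarrow> real^2^2" where
  "Amat t = vector [vector [0, 1], vector [-1, t]]"

text \<open>W j = A_1 A_2 ... A_j for the sequence x (indices start at 1); W 0 = I.\<close>
fun Wmat :: "(nat \<Rightarrow> real) \<Rightarrow> nat \<Rightarrow> real^2^2" where
  "Wmat x 0 = mat 1"
| "Wmat x (Suc j) = Wmat x j ** Amat (x (Suc j))"

definition ent_a :: "real^2^2 \<Rightarrow> real" where "ent_a W = W $ 1 $ 1"
definition ent_b :: "real^2^2 \<Rightarrow> real" where "ent_b W = W $ 1 $ 2"
definition ent_c :: "real^2^2 \<Rightarrow> real" where "ent_c W = W $ 2 $ 1"
definition ent_d :: "real^2^2 \<Rightarrow> real" where "ent_d W = W $ 2 $ 2"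

end

theory Submission
  imports Defs
begin

text \<open>Writing \<open>W\<^sub>j\<^sub>+\<^sub>1 = W\<^sub>j A\<^sub>j\<^sub>+\<^sub>1\<close> entrywise gives \<open>a\<^sub>j\<^sub>+\<^sub>1 = -b\<^sub>j\<close>, \<open>c\<^sub>j\<^sub>+\<^sub>1 = -d\<^sub>j\<close>,
  so every sign condition is a condition on the second column \<open>(b\<^sub>j, d\<^sub>j)\<close> alone, and
  \<open>det W\<^sub>j\<^sub>+\<^sub>1 = 1\<close> becomes the Wronskian identity \<open>b\<^sub>j\<^sub>+\<^sub>1 d\<^sub>j - b\<^sub>j d\<^sub>j\<^sub>+\<^sub>1 = 1\<close>.
  Since \<open>b\<^sub>0 = 0\<close> and \<open>W\<^sub>m = -I\<close> forces \<open>d\<^sub>m\<^sub>-\<^sub>1 = 0\<close>, condition (B) makes all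
  \<open>b\<^sub>j, d\<^sub>j\<close> with \<open>j \<le> m - 1\<close> nonnegative; the Wronskian identity then gives
  \<open>b\<^sub>j\<^sub>+\<^sub>1 d\<^sub>j \<ge> 1\<close>, so neither factor vanishes and the weak inequalities are strict.\<close>

lemma Wmat_Suc_entries:
  "ent_a (Wmat x (Suc j)) = - ent_b (Wmat x j)"
  "ent_c (Wmat x (Suc j)) = - ent_d (Wmat x j)"
  "ent_b (Wmat x (Suc j)) = ent_a (Wmat x j) + x (Suc j) * ent_b (Wmat x j)"
  "ent_d (Wmat x (Suc j)) = ent_c (Wmat x j) + x (Suc j) * ent_d (Wmat x j)"
  by (simp_all add: ent_a_def ent_b_def ent_c_def ent_d_def Amat_def
      matrix_matrix_mult_def sum_2 vector_def)

lemma Wmat_0_entries: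
  "ent_a (Wmat x 0) = 1" "ent_b (Wmat x 0) = 0" "ent_c (Wmat x 0) = 0" "ent_d (Wmat x 0) = 1"
  by (simp_all add: ent_a_def ent_b_def ent_c_def ent_d_def mat_def)

declare Wmat.simps [simp del]

lemma det_Wmat:
  "ent_a (Wmat x j) * ent_d (Wmat x j) - ent_b (Wmat x j) * ent_c (Wmat x j) = 1"
  by (induction j) (simp_all add: Wmat_Suc_entries Wmat_0_entries algebra_simps)

lemma Wmat_wronskian:
  "ent_b (Wmat x (Suc j)) * ent_d (Wmat x j) - ent_b (Wmat x j) * ent_d (Wmat x (Suc j)) = 1"
  using det_Wmat[of x "Suc j"] by (simp add: Wmat_Suc_entries algebra_simps)

lemma ent_d_eq_0_if_Wmat_Suc_eq_minus_one:
  assumes "Wmat x (Suc n) = - mat 1"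
  shows "ent_d (Wmat x n) = 0"
  using Wmat_Suc_entries(2)[of x n] assms by (simp add: ent_c_def mat_def)

lemma wronskian_nonneg_imp_pos:
  fixes b d :: "nat \<Rightarrow> real"
  assumes wronskian: "\<And>j. j < n \<Longrightarrow> b (Suc j) * d j - b j * d (Suc j) = 1"
    and b_nonneg: "\<And>j. j \<le> n \<Longrightarrow> b j \<ge> 0"
    and d_nonneg: "\<And>j. j \<le> n \<Longrightarrow> d j \<ge> 0"
    and "j < n"
  shows "b (Suc j) > 0" "d j > 0"
proof -
  have "b j * d (Suc j) \<ge> 0"
    using \<open>j < n\<close> b_nonneg d_nonneg by simp
  then have "b (Suc j) * d j > 0"
    using wronskian[OF \<open>j < n\<close>] by linarith
  then show "b (Suc j) > 0" "d j > 0"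
    using b_nonneg[of "Suc j"] d_nonneg[of j] \<open>j < n\<close> by (auto simp: zero_less_mult_iff)
qed

lemma Wmat_sign_conditions_iff_second_column:
  fixes R :: "real \<Rightarrow> real \<Rightarrow> bool"
  assumes R_uminus: "\<And>s t. R (- s) (- t) \<longleftrightarrow> R t s"
  shows "(\<forall>j\<in>{1..n}. (j \<noteq> 1 \<longrightarrow> R (ent_a (Wmat x j)) 0) \<and> R (ent_c (Wmat x j)) 0 \<and>
                      R 0 (ent_b (Wmat x j)) \<and> (j \<noteq> n \<longrightarrow> R 0 (ent_d (Wmat x j))))
    \<longleftrightarrow> (\<forall>j\<in>{1..n}. R 0 (ent_b (Wmat x j))) \<and> (\<forall>j<n. R 0 (ent_d (Wmat x j)))"
    (is "?signs \<longleftrightarrow> ?column")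
proof
  assume ?signs
  have "R 0 (ent_d (Wmat x j))" if "j < n" for j
  proof -
    have "R (ent_c (Wmat x (Suc j))) 0"
      using \<open>?signs\<close> that by auto
    then show ?thesis
      using R_uminus[of "ent_d (Wmat x j)" 0] by (simp add: Wmat_Suc_entries)
  qed
  with \<open>?signs\<close> show ?column by auto
next
  assume column: ?column
  show ?signs
  proof (intro ballI conjI impI)
    fix j assume j: "j \<in> {1..n}"
    then obtain k where k: "j = Suc k" "k < n"
      by (cases j) auto
    show "R (ent_a (Wmat x j)) 0" if "j \<noteq> 1"
      using column k that R_uminus[of "ent_b (Wmat x k)" 0] by (simp add: Wmat_Suc_entries)
    show "R (ent_c (Wmat x j)) 0"
      using column k R_uminus[of "ent_d (Wmat x k)" 0] by (simp add: Wmat_Suc_entries)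
    show "R 0 (ent_b (Wmat x j))"
      using column j by blast
    show "R 0 (ent_d (Wmat x j))" if "j \<noteq> n"
      using column j that by auto
  qed
qed

lemma Wmat_second_column_pos:
  assumes "Wmat x (Suc n) = - mat 1"
    and b_nonneg: "\<forall>j\<in>{1..n}. 0 \<le> ent_b (Wmat x j)"
    and d_nonneg: "\<forall>j<n. 0 \<le> ent_d (Wmat x j)"
  shows "(\<forall>j\<in>{1..n}. 0 < ent_b (Wmat x j)) \<and> (\<forall>j<n. 0 < ent_d (Wmat x j))"
proof -
  define b where "b j = ent_b (Wmat x j)" for j
  define d where "d j = ent_d (Wmat x j)" for j
  have "b j \<ge> 0" if "j \<le> n" for j
    using b_nonneg that by (cases "j = 0") (auto simp: b_def Wmat_0_entries)
  moreover have "d j \<ge> 0" if "j \<le> n" for j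
    using d_nonneg that ent_d_eq_0_if_Wmat_Suc_eq_minus_one[OF assms(1)]
    by (cases "j = n") (auto simp: d_def)
  ultimately have "b (Suc j) > 0" "d j > 0" if "j < n" for j
    using wronskian_nonneg_imp_pos[of n b d j] Wmat_wronskian that
    by (simp_all add: b_def d_def)
  then show ?thesis
    by (auto simp: b_def d_def Suc_le_eq gr0_conv_Suc)
qed

theorem lemma3p1:
  fixes x :: "nat \<Rightarrow> real" and m :: nat
  assumes "m \<ge> 1"
  shows "(Wmat x m = - mat 1 \<and>
           (\<forall>j\<in>{1..m-1}. (j \<noteq> 1 \<longrightarrow> ent_a (Wmat x j) < 0) \<and> ent_c (Wmat x j) < 0 \<and>
                            ent_b (Wmat x j) > 0 \<and> (j \<noteq> m-1 \<longrightarrow> ent_d (Wmat x j) > 0)))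
     \<longleftrightarrow>
         (Wmat x m = - mat 1 \<and>
           (\<forall>j\<in>{1..m-1}. (j \<noteq> 1 \<longrightarrow> ent_a (Wmat x j) \<le> 0) \<and> ent_c (Wmat x j) \<le> 0 \<and>
                            ent_b (Wmat x j) \<ge> 0 \<and> (j \<noteq> m-1 \<longrightarrow> ent_d (Wmat x j) \<ge> 0)))"
proof -
  have m: "m = Suc (m - 1)"
    using assms by simp
  show ?thesis
    unfolding Wmat_sign_conditions_iff_second_column[where R = "(<)", OF neg_less_iff_less]
      Wmat_sign_conditions_iff_second_column[where R = "(\<le>)", OF neg_le_iff_le]
    using Wmat_second_column_pos[of x "m - 1"] m by (auto intro: less_imp_le)
qed

end
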